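(* Let $(D,S,t_{\max})$ and $(D',S',t'_{\max})$ both satisfy the standing assumptions below with the same (known) initial moment $t_{\min}$, and let $w^\infty$, $w'^\infty$ be their far-field patterns. Fix $\hat x\in\mathbb S^2$ and $0\le k_{\min}<k_{\max}$. If $w^\infty(\hat x,k)=w'^\infty(\hat x,k)$ and $w^\infty(-\hat x,k)=w'^\infty(-\hat x,k)$ for all $k\in(k_{\min},k_{\max})$, then $K_D^{(\hat x)}=K_{D'}^{(\hat x)}$ and $t_{\max}=t'_{\max}$.
   Context: Standing assumptions on a triple $(D,S,t_{\max})$: $D\subset\mathbb R^3$ is a bounded Lipschitz domain (open, connected) with $\mathbb R^3\setminus\overline D$ connected; $0\le t_{\min}<t_{\max}$; $S\in C([t_{\min},t_{\max}];L^\infty(D))$ is real-valued with $S\ge c_0>0$ a.e. on $D\times[t_{\min},t_{\max}]$ for some $c_0>0$. The far-field pattern is $w^\infty(\hat x,k)=\frac{1}{\sqrt{2\pi}}\int_{t_{\min}}^{t_{\max}}\int_D e^{{\rm i}k(t-\hat x\cdot y)}S(y,t)\,dy\,dt$ for $\hat x\in\mathbb S^2$, $k\in\mathbb R$. With $\hat x\cdot D=\{\hat x\cdot y:y\in D\}$, $K_D^{(\hat x)}=\{y\in\mathbb R^3:\inf(\hat x\cdot D)<\hat x\cdot y<\sup(\hat x\cdot D)\}$. *)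

theory Defs
  imports "HOL-Analysis.Analysis"
begin

definition lipschitz_domain :: "(real^3) set \<Rightarrow> bool" where
  "lipschitz_domain D \<longleftrightarrow> open D \<and> connected D \<and> bounded D \<and> D \<noteq> {} \<and>
     (\<forall>p \<in> frontier D. \<exists>r>0. \<exists>Q g L.
        orthogonal_transformation (Q :: real^3 \<Rightarrow> real^3) \<and> lipschitz_on L UNIV (g :: real^2 \<Rightarrow> real) \<and>
        (\<forall>x \<in> ball p r. x \<in> D \<longleftrightarrow>
            (Q (x - p)) $ 3 > g (vector [(Q (x - p)) $ 1, (Q (x - p)) $ 2])))"

text \<open>S in C([tmin,tmax]; L^infty(D)), represented by a jointly measurable function
S y t, real valued, with S >= c0 > 0 a.e. on D x [tmin,tmax].\<close>
definition standing_assumptions ::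
  "(real^3) set \<Rightarrow> (real^3 \<Rightarrow> real \<Rightarrow> real) \<Rightarrow> real \<Rightarrow> real \<Rightarrow> bool" where
  "standing_assumptions D S tmin tmax \<longleftrightarrow>
     lipschitz_domain D \<and> connected (- closure D) \<and>
     0 \<le> tmin \<and> tmin < tmax \<and>
     (\<lambda>z. S (fst z) (snd z)) \<in> borel_measurable (lebesgue_on (D \<times> {tmin..tmax})) \<and>
     (\<forall>t \<in> {tmin..tmax}. (\<lambda>y. S y t) \<in> borel_measurable (lebesgue_on D) \<and>
        (\<exists>B. AE y in lebesgue_on D. \<bar>S y t\<bar> \<le> B)) \<and>
     (\<forall>t \<in> {tmin..tmax}. \<forall>e>0. \<exists>\<delta>>0. \<forall>s \<in> {tmin..tmax}. \<bar>s - t\<bar> < \<delta> \<longrightarrow>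
        (AE y in lebesgue_on D. \<bar>S y s - S y t\<bar> \<le> e)) \<and>
     (\<exists>c0>0. AE z in lebesgue_on (D \<times> {tmin..tmax}). S (fst z) (snd z) \<ge> c0)"

definition far_field ::
  "(real^3) set \<Rightarrow> (real^3 \<Rightarrow> real \<Rightarrow> real) \<Rightarrow> real \<Rightarrow> real \<Rightarrow> real^3 \<Rightarrow> real \<Rightarrow> complex" where
  "far_field D S tmin tmax xh k =
     complex_of_real (1 / sqrt (2 * pi)) *
     (LINT z : D \<times> {tmin..tmax} | lebesgue.
        exp (\<i> * complex_of_real (k * (snd z - xh \<bullet> fst z))) * complex_of_real (S (fst z) (snd z)))"

definition K_strip :: "(real^3) set \<Rightarrow> real^3 \<Rightarrow> (real^3) set" where
  "K_strip D xh = {y. Inf ((\<lambda>y. xh \<bullet> y) ` D) < xh \<bullet> y \<and> xh \<bullet> y < Sup ((\<lambda>y. xh \<bullet> y) ` D)}"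

end

theory Submission
  imports Defs "HOL-Complex_Analysis.Complex_Analysis"
begin

text \<open>Along a direction \<open>v\<close> the far-field pattern is, up to a constant, the Fourier transform
  \<open>F k = \<integral> exp (\<i> k \<psi>) S\<close> of the source against the bounded phase \<open>\<psi> (y, t) = t - v \<bullet> y\<close>. Hence \<open>F\<close>
  extends to an entire function, so data on an interval of wave numbers determine it everywhere, in
  particular on the imaginary axis, where it is the Laplace transform \<open>\<tau> \<mapsto> \<integral> exp (\<tau> \<psi>) S\<close>. As
  \<open>S \<ge> c0 > 0\<close>, the exponential growth rate of this transform is \<open>sup \<psi> = tmax - inf (v \<bullet> D)\<close> as
  \<open>\<tau> \<rightarrow> \<infinity>\<close> and \<open>- inf \<psi> = sup (v \<bullet> D) - tmin\<close> as \<open>\<tau> \<rightarrow> -\<infinity>\<close>. Since \<open>tmin\<close> is shared, the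
  directions \<open>xh\<close> and \<open>-xh\<close> yield \<open>inf (xh \<bullet> D)\<close>, \<open>sup (xh \<bullet> D)\<close> and \<open>tmax\<close>.\<close>

lemma uniform_AE_bound_compact:
  fixes f :: "'a \<Rightarrow> 'b::metric_space \<Rightarrow> real"
  assumes "compact I"
    and bounded: "\<forall>t\<in>I. \<exists>B. AE y in M. \<bar>f y t\<bar> \<le> B"
    and continuous: "\<forall>t\<in>I. \<forall>e>0. \<exists>\<delta>>0. \<forall>s\<in>I. dist s t < \<delta> \<longrightarrow> (AE y in M. \<bar>f y s - f y t\<bar> \<le> e)"
  shows "\<exists>C. \<forall>t\<in>I. AE y in M. \<bar>f y t\<bar> \<le> C"
proof -
  have "\<exists>\<delta>>0. \<exists>B. \<forall>s\<in>I. dist s t < \<delta> \<longrightarrow> (AE y in M. \<bar>f y s\<bar> \<le> B)" if t: "t \<in> I" for t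
  proof -
    obtain B where B: "AE y in M. \<bar>f y t\<bar> \<le> B" using bounded t by blast
    obtain \<delta> where \<delta>: "\<delta> > 0" "\<forall>s\<in>I. dist s t < \<delta> \<longrightarrow> (AE y in M. \<bar>f y s - f y t\<bar> \<le> 1)"
      using continuous t zero_less_one by blast
    have "AE y in M. \<bar>f y s\<bar> \<le> B + 1" if "s \<in> I" "dist s t < \<delta>" for s
    proof -
      have "AE y in M. \<bar>f y s - f y t\<bar> \<le> 1" using \<delta>(2) that by blast
      with B show ?thesis by eventually_elim auto
    qed
    with \<delta>(1) show ?thesis by blast
  qed
  then obtain \<delta> B where \<delta>B: "\<And>t. t \<in> I \<Longrightarrow> \<delta> t > 0"
    "\<And>t s. t \<in> I \<Longrightarrow> s \<in> I \<Longrightarrow> dist s t < \<delta> t \<Longrightarrow> AE y in M. \<bar>f y s\<bar> \<le> B t"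
    by metis
  have "I \<subseteq> (\<Union>t\<in>I. ball t (\<delta> t))"
    using \<delta>B(1) by force
  then obtain K where K: "K \<subseteq> I" "finite K" "I \<subseteq> (\<Union>t\<in>K. ball t (\<delta> t))"
    using compactE_image[OF \<open>compact I\<close>, of I "\<lambda>t. ball t (\<delta> t)"] by blast
  have "AE y in M. \<bar>f y s\<bar> \<le> (\<Sum>t\<in>K. \<bar>B t\<bar>)" if s: "s \<in> I" for s
  proof -
    obtain t where t: "t \<in> K" "dist s t < \<delta> t"
      using K(3) s by (auto simp: dist_commute)
    have "B t \<le> (\<Sum>t\<in>K. \<bar>B t\<bar>)"
      using t(1) K(2) by (meson abs_ge_self abs_ge_zero member_le_sum order_trans)
    moreover have "AE y in M. \<bar>f y s\<bar> \<le> B t"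
      using \<delta>B(2) t K(1) s by blast
    ultimately show ?thesis by (auto elim: eventually_mono)
  qed
  then show ?thesis by blast
qed

lemma AE_lebesgue_pair_bound:
  fixes f :: "'a::euclidean_space \<times> 'b::euclidean_space \<Rightarrow> real"
  assumes f: "f \<in> borel_measurable lebesgue"
    and slices: "AE t in lborel. AE y in lborel. \<bar>f (y, t)\<bar> \<le> C"
  shows "AE z in lebesgue. \<bar>f z\<bar> \<le> C"
proof -
  \<comment> \<open>Fubini needs Borel measurability, so pass to a Borel representative \<open>g\<close> of \<open>f\<close>.\<close>
  obtain g where g: "g \<in> borel_measurable lborel" and fg: "AE z in lborel. f z = g z"
    using completion_ex_borel_measurable_real[OF f] by blast
  obtain N where N: "{z \<in> space lborel. f z \<noteq> g z} \<subseteq> N" "N \<in> null_sets lborel"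
    using fg by (auto simp: eventually_ae_filter)
  then have "AE z in lborel \<Otimes>\<^sub>M lborel. z \<notin> N"
    by (simp add: lborel_prod AE_not_in)
  then have "AE y in lborel. AE t in lborel. (y, t) \<notin> N"
    by (rule lborel_pair.AE_pair)
  moreover have "{z \<in> space (lborel \<Otimes>\<^sub>M lborel). (fst z, snd z) \<notin> N} = space (lborel \<Otimes>\<^sub>M lborel) - N"
    by auto
  moreover have "space (lborel \<Otimes>\<^sub>M lborel) - N \<in> sets (lborel \<Otimes>\<^sub>M lborel)"
    using N(2) by (intro sets.compl_sets) (simp only: lborel_prod null_setsD2)
  ultimately have "AE t in lborel. AE y in lborel. (y, t) \<notin> N"
    using lborel_pair.AE_commute[of "\<lambda>y t. (y, t) \<notin> N"] by simp
  with slices have "AE t in lborel. AE y in lborel. \<bar>g (y, t)\<bar> \<le> C"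
  proof eventually_elim
    case (elim t)
    from elim show ?case by eventually_elim (use N(1) in force)
  qed
  moreover have g_pair [measurable]: "g \<in> borel_measurable (lborel \<Otimes>\<^sub>M lborel)"
    using g by (simp only: lborel_prod)
  moreover have gC: "{z \<in> space (lborel \<Otimes>\<^sub>M lborel). \<bar>g z\<bar> \<le> C} \<in> sets (lborel \<Otimes>\<^sub>M lborel)"
    by measurable
  ultimately have "AE y in lborel. AE t in lborel. \<bar>g (y, t)\<bar> \<le> C"
    using lborel_pair.AE_commute[of "\<lambda>y t. \<bar>g (y, t)\<bar> \<le> C"] by simp
  then have "AE z in lborel \<Otimes>\<^sub>M lborel. \<bar>g z\<bar> \<le> C"
    using gC by (intro lborel_pair.AE_pair_measure) auto
  then have "AE z in lborel. \<bar>g z\<bar> \<le> C"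
    by (simp only: lborel_prod)
  with fg have "AE z in lborel. \<bar>f z\<bar> \<le> C"
    by eventually_elim simp
  then show ?thesis by (simp add: AE_completion_iff)
qed

lemma sets_lebesgue_Times_Icc:
  fixes D :: "'a::euclidean_space set"
  assumes "open D"
  shows "D \<times> {a..b::real} \<in> sets lebesgue"
  using assms by (simp add: borel_open lborel_prod[symmetric] sets_completionI_sets pair_measureI)

lemma finite_measure_lebesgue_on_Times_Icc:
  fixes D :: "'a::euclidean_space set"
  assumes "open D" "bounded D"
  shows "finite_measure (lebesgue_on (D \<times> {a..b::real}))"
proof -
  have "D \<times> {a..b} \<in> sets lborel"
    using assms by (simp add: borel_open lborel_prod[symmetric] pair_measureI)
  moreover have "emeasure lborel (D \<times> {a..b}) < \<infinity>"
    using assms by (intro emeasure_bounded_finite bounded_Times) auto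
  ultimately show ?thesis
    by (intro finite_measureI) (simp add: emeasure_restrict_space emeasure_completion)
qed

lemma measure_lebesgue_on_open_pos:
  fixes \<Omega> U :: "'a::euclidean_space set"
  assumes "\<Omega> \<in> sets lebesgue" "finite_measure (lebesgue_on \<Omega>)" "open U" "U \<noteq> {}" "U \<subseteq> \<Omega>"
  shows "U \<in> sets (lebesgue_on \<Omega>)" "0 < measure (lebesgue_on \<Omega>) U"
proof -
  have "U \<in> sets lebesgue"
    using assms(3) by simp
  then show "U \<in> sets (lebesgue_on \<Omega>)"
    using assms(1,5) by (simp add: sets_restrict_space_iff)
  obtain x where "x \<in> U"
    using assms(4) by blast
  then obtain a b where box: "box a b \<subseteq> U" "\<forall>i\<in>Basis. a \<bullet> i < b \<bullet> i"
    using open_contains_box[OF assms(3)] by metis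
  have "0 < emeasure lborel (box a b)"
    using box(2) by (subst emeasure_lborel_box) (auto intro!: prod_pos simp: inner_diff_left less_imp_le)
  also have "\<dots> \<le> emeasure lborel U"
    using box(1) assms(3) by (intro emeasure_mono) auto
  also have "\<dots> = emeasure (lebesgue_on \<Omega>) U"
    using assms(1,3,5) by (simp add: emeasure_restrict_space emeasure_completion Int_absorb2)
  finally show "0 < measure (lebesgue_on \<Omega>) U"
    by (simp add: finite_measure.emeasure_eq_measure[OF assms(2)])
qed

section \<open>Fourier--Laplace transforms of bounded phases\<close>

definition fourier_laplace :: "'a measure \<Rightarrow> ('a \<Rightarrow> real) \<Rightarrow> ('a \<Rightarrow> real) \<Rightarrow> complex \<Rightarrow> complex" where
  "fourier_laplace M \<psi> S w = (LINT x|M. exp (\<i> * w * complex_of_real (\<psi> x)) * complex_of_real (S x))"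

definition laplace_transform :: "'a measure \<Rightarrow> ('a \<Rightarrow> real) \<Rightarrow> ('a \<Rightarrow> real) \<Rightarrow> real \<Rightarrow> real" where
  "laplace_transform M \<psi> S \<tau> = (LINT x|M. exp (\<tau> * \<psi> x) * S x)"

lemma fourier_laplace_imaginary_axis:
  "fourier_laplace M \<psi> S (- \<i> * complex_of_real \<tau>) = complex_of_real (laplace_transform M \<psi> S \<tau>)"
proof -
  have "exp (\<i> * (- \<i> * complex_of_real \<tau>) * complex_of_real (\<psi> x)) * complex_of_real (S x)
      = complex_of_real (exp (\<tau> * \<psi> x) * S x)" for x
    by (simp add: exp_of_real[symmetric])
  then show ?thesis
    unfolding fourier_laplace_def laplace_transform_def by (simp only: integral_complex_of_real)
qed

lemma laplace_transform_uminus: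
  "laplace_transform M (\<lambda>x. - \<psi> x) S \<tau> = laplace_transform M \<psi> S (- \<tau>)"
  by (simp add: laplace_transform_def)

lemma exp_mult_sums:
  fixes w c :: complex
  shows "(\<lambda>n. (\<i> * complex_of_real r) ^ n / fact n * c * w ^ n) sums (exp (\<i> * w * complex_of_real r) * c)"
proof -
  have "(\<lambda>n. (\<i> * w * complex_of_real r) ^ n /\<^sub>R fact n * c) sums (exp (\<i> * w * complex_of_real r) * c)"
    by (intro sums_mult2 exp_converges)
  moreover have "(\<i> * w * complex_of_real r) ^ n /\<^sub>R fact n * c = (\<i> * complex_of_real r) ^ n / fact n * c * w ^ n" for n
    by (simp add: scaleR_conv_of_real power_mult_distrib field_simps)
  ultimately show ?thesis by simp
qed

lemma fourier_laplace_sums: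
  fixes \<psi> S :: "'a \<Rightarrow> real"
  assumes S: "integrable M S" and \<psi>: "\<psi> \<in> borel_measurable M"
    and bounded: "\<And>x. x \<in> space M \<Longrightarrow> \<bar>\<psi> x\<bar> \<le> R"
  shows "(\<lambda>n. (LINT x|M. (\<i> * complex_of_real (\<psi> x)) ^ n / fact n * complex_of_real (S x)) * w ^ n)
           sums fourier_laplace M \<psi> S w"
proof -
  define f where "f n x = (\<i> * complex_of_real (\<psi> x)) ^ n / fact n * complex_of_real (S x) * w ^ n" for n x
  have f_bound: "norm (f n x) \<le> (norm w * R) ^ n / fact n * \<bar>S x\<bar>" if "x \<in> space M" for n x
  proof -
    have "norm (f n x) = (norm w * \<bar>\<psi> x\<bar>) ^ n / fact n * \<bar>S x\<bar>"
      unfolding f_def by (simp add: norm_mult norm_divide norm_power power_mult_distrib)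
    also have "\<dots> \<le> (norm w * R) ^ n / fact n * \<bar>S x\<bar>"
      using bounded[OF that] by (intro mult_right_mono divide_right_mono power_mono mult_left_mono) auto
    finally show ?thesis .
  qed
  have majorant: "summable (\<lambda>n. (norm w * R) ^ n / fact n * c)" for c
    using summable_mult2[OF summable_exp[of "norm w * R"]] by (simp add: field_simps)
  have f_integrable: "integrable M (f n)" for n
  proof (rule Bochner_Integration.integrable_bound)
    show "integrable M (\<lambda>x. (norm w * R) ^ n / fact n * \<bar>S x\<bar>)"
      using S by (intro integrable_mult_right integrable_abs)
    show "f n \<in> borel_measurable M"
      using \<psi> S unfolding f_def by measurable
    show "AE x in M. norm (f n x) \<le> norm ((norm w * R) ^ n / fact n * \<bar>S x\<bar>)"
      using f_bound by (intro AE_I2) (smt (verit) norm_ge_zero real_norm_def)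
  qed
  have "(\<lambda>n. integral\<^sup>L M (f n)) sums (\<integral>x. (\<Sum>n. f n x) \<partial>M)"
  proof (rule sums_integral[OF f_integrable])
    show "AE x in M. summable (\<lambda>n. norm (f n x))"
      using f_bound by (intro AE_I2 summable_comparison_test'[OF majorant, where N=0]) auto
    have "norm (\<integral>x. norm (f n x) \<partial>M) \<le> (norm w * R) ^ n / fact n * (\<integral>x. \<bar>S x\<bar> \<partial>M)" for n
      using integral_mono[OF integrable_norm[OF f_integrable] integrable_mult_right[OF integrable_abs[OF S]] f_bound]
      by simp
    then show "summable (\<lambda>n. \<integral>x. norm (f n x) \<partial>M)"
      by (intro summable_comparison_test'[OF majorant, where N=0]) auto
  qed
  moreover have "(\<Sum>n. f n x) = exp (\<i> * w * complex_of_real (\<psi> x)) * complex_of_real (S x)" for x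
    unfolding f_def using exp_mult_sums by (rule sums_unique[symmetric])
  ultimately show ?thesis
    unfolding fourier_laplace_def f_def by (simp add: integral_mult_left_zero)
qed

lemma holomorphic_on_UNIV_if_sums:
  fixes a :: "nat \<Rightarrow> complex"
  assumes "\<And>w. (\<lambda>n. a n * w ^ n) sums G w"
  shows "G holomorphic_on UNIV"
proof -
  have "conv_radius a = \<infinity>"
  proof (rule conv_radius_inftyI'[where c=0])
    fix r :: real assume "r > 0"
    then show "\<exists>z. norm z = r \<and> summable (\<lambda>n. a n * z ^ n)"
      using assms[of "complex_of_real r"] by (intro exI[of _ "complex_of_real r"]) (auto simp: sums_iff)
  qed
  then have "((\<lambda>w. \<Sum>n. a n * w ^ n) has_field_derivative (\<Sum>n. diffs a n * z ^ n)) (at z)" for z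
    by (intro has_field_derivative_powser) simp
  moreover have "G = (\<lambda>w. \<Sum>n. a n * w ^ n)"
    using assms by (auto simp: sums_iff)
  ultimately show ?thesis
    unfolding holomorphic_on_def field_differentiable_def by blast
qed

lemma fourier_laplace_holomorphic:
  assumes "integrable M S" "\<psi> \<in> borel_measurable M" "\<And>x. x \<in> space M \<Longrightarrow> \<bar>\<psi> x\<bar> \<le> R"
  shows "fourier_laplace M \<psi> S holomorphic_on UNIV"
  by (rule holomorphic_on_UNIV_if_sums, rule fourier_laplace_sums[OF assms])

lemma entire_eq_if_eq_on_interval:
  fixes G H :: "complex \<Rightarrow> complex"
  assumes "G holomorphic_on UNIV" "H holomorphic_on UNIV" "a < b"
    and "\<And>k. k \<in> {a<..<b} \<Longrightarrow> G (complex_of_real k) = H (complex_of_real k)"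
  shows "G w = H w"
proof -
  have limit: "complex_of_real a islimpt complex_of_real ` {a<..<b}"
    using \<open>a < b\<close> by (intro islimpt_isCont_image islimpt_greaterThanLessThan1 continuous_intros)
      (auto simp: eventually_at_filter)
  have "G w - H w = 0"
  proof (rule analytic_continuation[where S=UNIV and f="\<lambda>z. G z - H z"])
    show "(\<lambda>z. G z - H z) holomorphic_on UNIV"
      using assms(1,2) by (intro holomorphic_intros)
  qed (use limit assms(4) in auto)
  then show ?thesis by simp
qed

section \<open>Growth of Laplace transforms\<close>

text \<open>Against a density bounded below by a positive constant, a sharp upper bound of \<open>\<psi>\<close> is the
  exponential growth rate of the Laplace transform, which is how the transform determines it.\<close>

definition sharp_upper_bound :: "'a measure \<Rightarrow> ('a \<Rightarrow> real) \<Rightarrow> real \<Rightarrow> bool" where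
  "sharp_upper_bound M \<psi> B \<longleftrightarrow> (\<forall>x\<in>space M. \<psi> x \<le> B) \<and>
     (\<forall>\<epsilon>>0. \<exists>U\<in>sets M. 0 < measure M U \<and> (\<forall>x\<in>U. B - \<epsilon> < \<psi> x))"

lemma integrable_exp_mult_bounded_above:
  fixes \<psi> S :: "'a \<Rightarrow> real"
  assumes "integrable M S" "\<psi> \<in> borel_measurable M" "\<forall>x\<in>space M. \<psi> x \<le> B" "\<tau> \<ge> 0"
  shows "integrable M (\<lambda>x. exp (\<tau> * \<psi> x) * S x)"
proof (rule Bochner_Integration.integrable_bound)
  show "integrable M (\<lambda>x. exp (\<tau> * B) * \<bar>S x\<bar>)"
    using assms(1) by auto
  show "(\<lambda>x. exp (\<tau> * \<psi> x) * S x) \<in> borel_measurable M"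
    using assms(1,2) by measurable
  show "AE x in M. norm (exp (\<tau> * \<psi> x) * S x) \<le> norm (exp (\<tau> * B) * \<bar>S x\<bar>)"
    using assms(3,4) by (intro AE_I2) (auto simp: abs_mult intro!: mult_right_mono mult_left_mono)
qed

lemma laplace_transform_le:
  fixes \<psi> S :: "'a \<Rightarrow> real"
  assumes "integrable M S" "AE x in M. S x \<ge> 0" "\<psi> \<in> borel_measurable M" "\<forall>x\<in>space M. \<psi> x \<le> B" "\<tau> \<ge> 0"
  shows "laplace_transform M \<psi> S \<tau> \<le> exp (\<tau> * B) * integral\<^sup>L M S"
proof -
  have "AE x in M. exp (\<tau> * \<psi> x) * S x \<le> exp (\<tau> * B) * S x"
    using assms(2) AE_space
  proof eventually_elim
    case (elim x)
    then show ?case using assms(4,5) by (auto intro!: mult_right_mono mult_left_mono)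
  qed
  then have "laplace_transform M \<psi> S \<tau> \<le> (LINT x|M. exp (\<tau> * B) * S x)"
    unfolding laplace_transform_def using assms(1)
    by (intro integral_mono_AE integrable_exp_mult_bounded_above[OF assms(1,3,4,5)]) auto
  then show ?thesis by simp
qed

lemma laplace_transform_ge:
  fixes \<psi> S :: "'a \<Rightarrow> real"
  assumes "integrable M S" "c \<ge> 0" "AE x in M. S x \<ge> c"
    and "\<psi> \<in> borel_measurable M" "\<forall>x\<in>space M. \<psi> x \<le> B" "\<tau> \<ge> 0"
    and U: "U \<in> sets M" "0 < measure M U" "\<forall>x\<in>U. b < \<psi> x"
  shows "c * measure M U * exp (\<tau> * b) \<le> laplace_transform M \<psi> S \<tau>"
proof -
  have "emeasure M U < \<infinity>"
    using U(2) measure_zero_top by (fastforce simp: top.not_eq_extremum)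
  then have "c * measure M U * exp (\<tau> * b) = (LINT x|M. indicator U x * (c * exp (\<tau> * b)))"
    using U(1) by (simp add: ac_simps)
  also have "\<dots> \<le> laplace_transform M \<psi> S \<tau>"
    unfolding laplace_transform_def
  proof (intro integral_mono_AE integrable_exp_mult_bounded_above[OF assms(1,4,5,6)])
    show "integrable M (\<lambda>x. indicator U x * (c * exp (\<tau> * b)))"
      using U(1) \<open>emeasure M U < \<infinity>\<close> by (intro integrable_mult_left integrable_real_indicator)
    have "c * exp (\<tau> * b) \<le> exp (\<tau> * \<psi> x) * S x" if "x \<in> U" "c \<le> S x" for x
    proof -
      have "exp (\<tau> * b) \<le> exp (\<tau> * \<psi> x)"
        using that(1) U(3) assms(6) by (auto intro: mult_left_mono less_imp_le)
      with that(2) assms(2) show ?thesis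
        by (subst mult.commute) (intro mult_mono, auto)
    qed
    with assms(3) show "AE x in M. indicator U x * (c * exp (\<tau> * b)) \<le> exp (\<tau> * \<psi> x) * S x"
      using assms(2) by (auto simp: indicator_def elim!: eventually_mono)
  qed
  finally show ?thesis .
qed

lemma exp_growth_le:
  fixes b B c C :: real
  assumes "c > 0" and growth: "\<And>\<tau>. \<tau> \<ge> 0 \<Longrightarrow> c * exp (\<tau> * b) \<le> C * exp (\<tau> * B)"
  shows "b \<le> B"
proof (rule ccontr)
  assume "\<not> b \<le> B"
  define \<tau> where "\<tau> = (\<bar>C\<bar> / c + 1) / (b - B)"
  have "\<tau> \<ge> 0" "\<tau> * (b - B) = \<bar>C\<bar> / c + 1"
    using \<open>\<not> b \<le> B\<close> \<open>c > 0\<close> by (auto simp: \<tau>_def)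
  have "(\<bar>C\<bar> + 2 * c) * exp (\<tau> * B) = c * (1 + \<tau> * (b - B)) * exp (\<tau> * B)"
    using \<open>c > 0\<close> \<open>\<tau> * (b - B) = \<bar>C\<bar> / c + 1\<close> by (simp add: field_simps)
  also have "\<dots> \<le> c * exp (\<tau> * (b - B)) * exp (\<tau> * B)"
    using \<open>c > 0\<close> exp_ge_add_one_self by (intro mult_right_mono mult_left_mono) auto
  also have "\<dots> = c * exp (\<tau> * b)"
    by (simp add: algebra_simps flip: exp_add)
  also have "\<dots> \<le> C * exp (\<tau> * B)"
    using growth[OF \<open>\<tau> \<ge> 0\<close>] .
  also have "\<dots> \<le> \<bar>C\<bar> * exp (\<tau> * B)"
    by (intro mult_right_mono) auto
  finally show False
    using \<open>c > 0\<close> by (simp add: field_simps mult_le_0_iff)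
qed

lemma sharp_upper_bound_le_if_laplace_transform_le:
  fixes \<psi> S :: "'a \<Rightarrow> real" and \<psi>' S' :: "'b \<Rightarrow> real"
  assumes B: "sharp_upper_bound M \<psi> B" and B': "sharp_upper_bound M' \<psi>' B'"
    and S: "integrable M S" "AE x in M. S x \<ge> 0" "\<psi> \<in> borel_measurable M"
    and S': "integrable M' S'" "c' > 0" "AE x in M'. S' x \<ge> c'" "\<psi>' \<in> borel_measurable M'"
    and le: "\<And>\<tau>. \<tau> \<ge> 0 \<Longrightarrow> laplace_transform M' \<psi>' S' \<tau> \<le> laplace_transform M \<psi> S \<tau>"
  shows "B' \<le> B"
proof (rule field_le_epsilon)
  fix \<epsilon> :: real assume "\<epsilon> > 0"
  with B' obtain U where U: "U \<in> sets M'" "0 < measure M' U" "\<forall>x\<in>U. B' - \<epsilon> < \<psi>' x"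
    unfolding sharp_upper_bound_def by blast
  have "c' * measure M' U * exp (\<tau> * (B' - \<epsilon>)) \<le> integral\<^sup>L M S * exp (\<tau> * B)" if "\<tau> \<ge> 0" for \<tau>
  proof -
    have "c' * measure M' U * exp (\<tau> * (B' - \<epsilon>)) \<le> laplace_transform M' \<psi>' S' \<tau>"
      using B' unfolding sharp_upper_bound_def
      by (intro laplace_transform_ge[OF S'(1) less_imp_le[OF S'(2)] S'(3,4) _ that U]) blast
    also have "\<dots> \<le> laplace_transform M \<psi> S \<tau>"
      using le[OF that] .
    also have "\<dots> \<le> exp (\<tau> * B) * integral\<^sup>L M S"
      using B unfolding sharp_upper_bound_def
      by (intro laplace_transform_le[OF S _ that]) blast
    finally show ?thesis by (simp add: mult.commute)
  qed
  moreover have "c' * measure M' U > 0"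
    using S'(2) U(2) by simp
  ultimately have "B' - \<epsilon> \<le> B"
    by (rule exp_growth_le[rotated])
  then show "B' \<le> B + \<epsilon>" by simp
qed

lemma sharp_upper_bound_unique_laplace_transform:
  fixes \<psi> S :: "'a \<Rightarrow> real" and \<psi>' S' :: "'b \<Rightarrow> real"
  assumes B: "sharp_upper_bound M \<psi> B"
    and S: "integrable M S" "c > 0" "AE x in M. S x \<ge> c" "\<psi> \<in> borel_measurable M"
    and B': "sharp_upper_bound M' \<psi>' B'"
    and S': "integrable M' S'" "c' > 0" "AE x in M'. S' x \<ge> c'" "\<psi>' \<in> borel_measurable M'"
    and eq: "\<And>\<tau>. \<tau> \<ge> 0 \<Longrightarrow> laplace_transform M \<psi> S \<tau> = laplace_transform M' \<psi>' S' \<tau>"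
  shows "B = B'"
proof -
  have "AE x in M. S x \<ge> 0" "AE x in M'. S' x \<ge> 0"
    using S(2,3) S'(2,3) by (auto elim!: eventually_mono)
  then have "B' \<le> B" "B \<le> B'"
    using eq by (auto intro: sharp_upper_bound_le_if_laplace_transform_le[OF B B' S(1) _ S(4) S']
                   sharp_upper_bound_le_if_laplace_transform_le[OF B' B S'(1) _ S'(4) S])
  then show ?thesis by simp
qed

lemma sharp_upper_bound_lebesgue_onI:
  fixes \<psi> :: "'a::euclidean_space \<Rightarrow> real"
  assumes "\<Omega> \<in> sets lebesgue" "finite_measure (lebesgue_on \<Omega>)" "\<forall>x\<in>\<Omega>. \<psi> x \<le> B"
    and approx: "\<And>\<epsilon>. \<epsilon> > 0 \<Longrightarrow> \<exists>U. open U \<and> U \<noteq> {} \<and> U \<subseteq> \<Omega> \<and> (\<forall>x\<in>U. B - \<epsilon> < \<psi> x)"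
  shows "sharp_upper_bound (lebesgue_on \<Omega>) \<psi> B"
  unfolding sharp_upper_bound_def
proof (intro conjI allI impI)
  show "\<forall>x\<in>space (lebesgue_on \<Omega>). \<psi> x \<le> B"
    using assms(1,3) by simp
  fix \<epsilon> :: real assume "\<epsilon> > 0"
  then obtain U where U: "open U" "U \<noteq> {}" "U \<subseteq> \<Omega>" "\<forall>x\<in>U. B - \<epsilon> < \<psi> x"
    using approx by blast
  then show "\<exists>U\<in>sets (lebesgue_on \<Omega>). 0 < measure (lebesgue_on \<Omega>) U \<and> (\<forall>x\<in>U. B - \<epsilon> < \<psi> x)"
    using measure_lebesgue_on_open_pos[OF assms(1,2) U(1-3)] by blast
qed

section \<open>Far-field patterns\<close>

lemma standing_assumptions_domain:
  assumes "standing_assumptions D S tmin tmax"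
  shows "open D" "bounded D" "D \<noteq> {}" "tmin < tmax"
  using assms unfolding standing_assumptions_def lipschitz_domain_def by auto

lemma standing_assumptions_integrable:
  assumes sa: "standing_assumptions D S tmin tmax"
  shows "integrable (lebesgue_on (D \<times> {tmin..tmax})) (\<lambda>z. S (fst z) (snd z))"
proof -
  let ?\<Omega> = "D \<times> {tmin..tmax}"
  note dom = standing_assumptions_domain[OF sa]
  have \<Omega>: "?\<Omega> \<in> sets lebesgue"
    using dom(1) by (rule sets_lebesgue_Times_Icc)
  have meas: "(\<lambda>z. S (fst z) (snd z)) \<in> borel_measurable (lebesgue_on ?\<Omega>)"
    and slice_bounded: "\<forall>t\<in>{tmin..tmax}. \<exists>B. AE y in lebesgue_on D. \<bar>S y t\<bar> \<le> B"
    and slice_continuous: "\<forall>t\<in>{tmin..tmax}. \<forall>e>0. \<exists>\<delta>>0. \<forall>s\<in>{tmin..tmax}. dist s t < \<delta> \<longrightarrow>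
          (AE y in lebesgue_on D. \<bar>S y s - S y t\<bar> \<le> e)"
    using sa unfolding standing_assumptions_def by (auto simp: dist_real_def)
  obtain C where C: "\<forall>t\<in>{tmin..tmax}. AE y in lebesgue_on D. \<bar>S y t\<bar> \<le> C"
    using uniform_AE_bound_compact[OF compact_Icc slice_bounded slice_continuous] by blast
  define f where "f z = indicator ?\<Omega> z *\<^sub>R S (fst z) (snd z)" for z
  have f: "f \<in> borel_measurable lebesgue"
    using meas \<Omega> unfolding f_def by (subst (asm) borel_measurable_restrict_space_iff) auto
  have "AE y in lborel. \<bar>f (y, t)\<bar> \<le> \<bar>C\<bar>" for t
  proof (cases "t \<in> {tmin..tmax}")
    case True
    with C have "AE y in lebesgue_on D. \<bar>S y t\<bar> \<le> C" by blast
    then have "AE y in lborel. y \<in> D \<longrightarrow> \<bar>S y t\<bar> \<le> C"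
      using dom(1) by (simp add: AE_restrict_space_iff AE_completion_iff)
    then show ?thesis by eventually_elim (auto simp: f_def indicator_def)
  qed (simp add: f_def)
  then have "AE z in lebesgue. \<bar>f z\<bar> \<le> \<bar>C\<bar>"
    using f by (intro AE_lebesgue_pair_bound) auto
  then have "AE z in lebesgue_on ?\<Omega>. norm (S (fst z) (snd z)) \<le> \<bar>C\<bar>"
    using \<Omega> by (simp add: AE_restrict_space_iff) (auto simp: f_def elim: eventually_mono)
  then show ?thesis
    using finite_measure_lebesgue_on_Times_Icc[OF dom(1,2)] meas
    by (intro finite_measure.integrable_const_bound) auto
qed

definition far_field_phase :: "real^3 \<Rightarrow> (real^3) \<times> real \<Rightarrow> real" where
  "far_field_phase v z = snd z - v \<bullet> fst z"

lemma far_field_phase_measurable: "far_field_phase v \<in> borel_measurable (lebesgue_on \<Omega>)"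
proof -
  have "far_field_phase v \<in> borel_measurable borel"
    unfolding far_field_phase_def by (intro borel_measurable_continuous_onI continuous_intros)
  then show ?thesis
    by (intro measurable_restrict_space1) (simp add: measurable_completion measurable_lborel1)
qed

lemma far_field_phase_bounded:
  assumes "bounded D"
  shows "\<exists>R. \<forall>z \<in> D \<times> {a..b}. \<bar>far_field_phase v z\<bar> \<le> R"
proof -
  obtain K where K: "\<And>y. y \<in> D \<Longrightarrow> norm y \<le> K"
    using assms bounded_iff by metis
  have "\<bar>far_field_phase v z\<bar> \<le> \<bar>a\<bar> + \<bar>b\<bar> + norm v * K" if z: "z \<in> D \<times> {a..b}" for z
  proof -
    have "\<bar>v \<bullet> fst z\<bar> \<le> norm v * norm (fst z)" by (rule Cauchy_Schwarz_ineq2)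
    also have "\<dots> \<le> norm v * K" using K z by (intro mult_left_mono) auto
    finally show ?thesis using z unfolding far_field_phase_def by auto
  qed
  then show ?thesis by blast
qed

lemma far_field_eq_fourier_laplace:
  assumes "open D"
  shows "far_field D S tmin tmax v k = complex_of_real (1 / sqrt (2 * pi)) *
    fourier_laplace (lebesgue_on (D \<times> {tmin..tmax})) (far_field_phase v) (\<lambda>z. S (fst z) (snd z)) (complex_of_real k)"
proof -
  have "set_lebesgue_integral lebesgue (D \<times> {tmin..tmax}) f = integral\<^sup>L (lebesgue_on (D \<times> {tmin..tmax})) f"
    for f :: "_ \<Rightarrow> complex"
    using sets_lebesgue_Times_Icc[OF assms]
    unfolding set_lebesgue_integral_def by (simp add: integral_restrict_space)
  then show ?thesis
    unfolding far_field_def fourier_laplace_def far_field_phase_def by (simp add: mult.assoc)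
qed

lemma laplace_transform_eq_if_far_field_eq:
  assumes sa: "standing_assumptions D S tmin tmax" and sa': "standing_assumptions D' S' tmin tmax'"
    and "a < b" and eq: "\<forall>k \<in> {a<..<b}. far_field D S tmin tmax v k = far_field D' S' tmin tmax' v k"
  shows "laplace_transform (lebesgue_on (D \<times> {tmin..tmax})) (far_field_phase v) (\<lambda>z. S (fst z) (snd z)) \<tau> =
         laplace_transform (lebesgue_on (D' \<times> {tmin..tmax'})) (far_field_phase v) (\<lambda>z. S' (fst z) (snd z)) \<tau>"
proof -
  have holomorphic: "fourier_laplace (lebesgue_on (D \<times> {t0..t1})) (far_field_phase v) (\<lambda>z. S (fst z) (snd z)) holomorphic_on UNIV"
    if sa0: "standing_assumptions D S t0 t1" for D S t0 t1
  proof -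
    obtain R where "\<forall>z \<in> D \<times> {t0..t1}. \<bar>far_field_phase v z\<bar> \<le> R"
      using far_field_phase_bounded standing_assumptions_domain(2)[OF sa0] by blast
    then show ?thesis
      by (intro fourier_laplace_holomorphic[OF standing_assumptions_integrable[OF sa0] far_field_phase_measurable])
        auto
  qed
  have "fourier_laplace (lebesgue_on (D \<times> {tmin..tmax})) (far_field_phase v) (\<lambda>z. S (fst z) (snd z)) w =
        fourier_laplace (lebesgue_on (D' \<times> {tmin..tmax'})) (far_field_phase v) (\<lambda>z. S' (fst z) (snd z)) w" for w
  proof (rule entire_eq_if_eq_on_interval[OF holomorphic[OF sa] holomorphic[OF sa'] \<open>a < b\<close>])
    fix k assume "k \<in> {a<..<b}"
    with eq have "far_field D S tmin tmax v k = far_field D' S' tmin tmax' v k" by blast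
    then show "fourier_laplace (lebesgue_on (D \<times> {tmin..tmax})) (far_field_phase v) (\<lambda>z. S (fst z) (snd z)) (complex_of_real k) =
        fourier_laplace (lebesgue_on (D' \<times> {tmin..tmax'})) (far_field_phase v) (\<lambda>z. S' (fst z) (snd z)) (complex_of_real k)"
      unfolding far_field_eq_fourier_laplace[OF standing_assumptions_domain(1)[OF sa]]
        far_field_eq_fourier_laplace[OF standing_assumptions_domain(1)[OF sa']]
      by simp
  qed
  from this[of "- \<i> * complex_of_real \<tau>"] show ?thesis
    by (simp only: fourier_laplace_imaginary_axis of_real_eq_iff)
qed

lemma sharp_upper_bound_far_field_phase:
  assumes "open D" "bounded D" "D \<noteq> {}" "a < b"
  shows "sharp_upper_bound (lebesgue_on (D \<times> {a..b})) (far_field_phase v) (b - Inf ((\<lambda>y. v \<bullet> y) ` D))"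
proof (rule sharp_upper_bound_lebesgue_onI)
  let ?m = "Inf ((\<lambda>y. v \<bullet> y) ` D)"
  have bdd: "bdd_below ((\<lambda>y. v \<bullet> y) ` D)"
    using assms(2) by (intro bounded_imp_bdd_below bounded_linear_image bounded_linear_inner_right)
  then show "\<forall>z\<in>D \<times> {a..b}. far_field_phase v z \<le> b - ?m"
    by (auto simp: far_field_phase_def intro!: diff_mono cInf_lower)
  fix \<epsilon> :: real assume "\<epsilon> > 0"
  then obtain y0 where y0: "y0 \<in> D" "v \<bullet> y0 < ?m + \<epsilon> / 2"
    using cInf_lessD[of "(\<lambda>y. v \<bullet> y) ` D" "?m + \<epsilon> / 2"] assms(3) by auto
  define t0 where "t0 = max a (b - \<epsilon> / 2)"
  have t0: "a \<le> t0" "t0 < b" "b - \<epsilon> / 2 \<le> t0"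
    using assms(4) \<open>\<epsilon> > 0\<close> by (auto simp: t0_def)
  show "\<exists>U. open U \<and> U \<noteq> {} \<and> U \<subseteq> D \<times> {a..b} \<and> (\<forall>z\<in>U. b - ?m - \<epsilon> < far_field_phase v z)"
  proof (intro exI conjI)
    let ?U = "(D \<inter> {y. v \<bullet> y < ?m + \<epsilon> / 2}) \<times> {t0<..<b}"
    show "open ?U"
      using assms(1) by (intro open_Times open_Int open_halfspace_lt open_greaterThanLessThan)
    show "?U \<noteq> {}"
      using y0 t0 by (auto intro!: exI[of _ "(y0, (t0 + b) / 2)"])
    show "?U \<subseteq> D \<times> {a..b}" "\<forall>z\<in>?U. b - ?m - \<epsilon> < far_field_phase v z"
      using t0 by (auto simp: far_field_phase_def)
  qed
qed (use assms in \<open>simp_all add: sets_lebesgue_Times_Icc finite_measure_lebesgue_on_Times_Icc\<close>)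

lemma sharp_upper_bound_neg_far_field_phase:
  assumes "open D" "bounded D" "D \<noteq> {}" "a < b"
  shows "sharp_upper_bound (lebesgue_on (D \<times> {a..b})) (\<lambda>z. - far_field_phase v z) (Sup ((\<lambda>y. v \<bullet> y) ` D) - a)"
proof (rule sharp_upper_bound_lebesgue_onI)
  let ?M = "Sup ((\<lambda>y. v \<bullet> y) ` D)"
  have bdd: "bdd_above ((\<lambda>y. v \<bullet> y) ` D)"
    using assms(2) by (intro bounded_imp_bdd_above bounded_linear_image bounded_linear_inner_right)
  then show "\<forall>z\<in>D \<times> {a..b}. - far_field_phase v z \<le> ?M - a"
    by (auto simp: far_field_phase_def intro!: diff_mono cSup_upper)
  fix \<epsilon> :: real assume "\<epsilon> > 0"
  then obtain y0 where y0: "y0 \<in> D" "?M - \<epsilon> / 2 < v \<bullet> y0"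
    using less_cSupD[of "(\<lambda>y. v \<bullet> y) ` D" "?M - \<epsilon> / 2"] assms(3) by auto
  define t0 where "t0 = min b (a + \<epsilon> / 2)"
  have t0: "a < t0" "t0 \<le> b" "t0 \<le> a + \<epsilon> / 2"
    using assms(4) \<open>\<epsilon> > 0\<close> by (auto simp: t0_def)
  show "\<exists>U. open U \<and> U \<noteq> {} \<and> U \<subseteq> D \<times> {a..b} \<and> (\<forall>z\<in>U. ?M - a - \<epsilon> < - far_field_phase v z)"
  proof (intro exI conjI)
    let ?U = "(D \<inter> {y. ?M - \<epsilon> / 2 < v \<bullet> y}) \<times> {a<..<t0}"
    show "open ?U"
      using assms(1) by (intro open_Times open_Int open_halfspace_gt open_greaterThanLessThan)
    show "?U \<noteq> {}"
      using y0 t0 by (auto intro!: exI[of _ "(y0, (a + t0) / 2)"])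
    show "?U \<subseteq> D \<times> {a..b}" "\<forall>z\<in>?U. ?M - a - \<epsilon> < - far_field_phase v z"
      using t0 by (auto simp: far_field_phase_def)
  qed
qed (use assms in \<open>simp_all add: sets_lebesgue_Times_Icc finite_measure_lebesgue_on_Times_Icc\<close>)

lemma far_field_determines_extent:
  assumes sa: "standing_assumptions D S tmin tmax" and sa': "standing_assumptions D' S' tmin tmax'"
    and "kmin < kmax" and eq: "\<forall>k \<in> {kmin<..<kmax}. far_field D S tmin tmax v k = far_field D' S' tmin tmax' v k"
  shows "tmax - Inf ((\<lambda>y. v \<bullet> y) ` D) = tmax' - Inf ((\<lambda>y. v \<bullet> y) ` D')"
    and "Sup ((\<lambda>y. v \<bullet> y) ` D) = Sup ((\<lambda>y. v \<bullet> y) ` D')"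
proof -
  obtain c where c: "c > 0" "AE z in lebesgue_on (D \<times> {tmin..tmax}). S (fst z) (snd z) \<ge> c"
    using sa unfolding standing_assumptions_def by blast
  obtain c' where c': "c' > 0" "AE z in lebesgue_on (D' \<times> {tmin..tmax'}). S' (fst z) (snd z) \<ge> c'"
    using sa' unfolding standing_assumptions_def by blast
  note S = standing_assumptions_integrable[OF sa] c
  note S' = standing_assumptions_integrable[OF sa'] c'
  note phase = far_field_phase_measurable
  have neg_phase: "(\<lambda>z. - far_field_phase v z) \<in> borel_measurable (lebesgue_on \<Omega>)" for \<Omega>
    by (intro borel_measurable_uminus far_field_phase_measurable)
  note dom = standing_assumptions_domain[OF sa] and dom' = standing_assumptions_domain[OF sa']
  note laplace_eq = laplace_transform_eq_if_far_field_eq[OF sa sa' \<open>kmin < kmax\<close> eq]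
  show "tmax - Inf ((\<lambda>y. v \<bullet> y) ` D) = tmax' - Inf ((\<lambda>y. v \<bullet> y) ` D')"
    by (rule sharp_upper_bound_unique_laplace_transform[OF sharp_upper_bound_far_field_phase[OF dom] S phase
          sharp_upper_bound_far_field_phase[OF dom'] S' phase laplace_eq])
  have "Sup ((\<lambda>y. v \<bullet> y) ` D) - tmin = Sup ((\<lambda>y. v \<bullet> y) ` D') - tmin"
    by (rule sharp_upper_bound_unique_laplace_transform[OF sharp_upper_bound_neg_far_field_phase[OF dom] S neg_phase
          sharp_upper_bound_neg_far_field_phase[OF dom'] S' neg_phase])
      (simp only: laplace_transform_uminus laplace_eq)
  then show "Sup ((\<lambda>y. v \<bullet> y) ` D) = Sup ((\<lambda>y. v \<bullet> y) ` D')"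
    by simp
qed

lemma Inf_image_inner_uminus:
  "Inf ((\<lambda>y. (- v) \<bullet> y) ` D) = - Sup ((\<lambda>y::'a::real_inner. v \<bullet> y) ` D)"
proof -
  have "uminus ` (\<lambda>y. (- v) \<bullet> y) ` D = (\<lambda>y. v \<bullet> y) ` D"
    by (auto simp: image_image)
  then show ?thesis by (simp add: Inf_real_def)
qed

theorem theorem3p1:
  fixes D D' :: "(real^3) set" and S S' :: "real^3 \<Rightarrow> real \<Rightarrow> real"
    and tmin tmax tmax' kmin kmax :: real and xh :: "real^3"
  assumes "standing_assumptions D S tmin tmax"
    and "standing_assumptions D' S' tmin tmax'"
    and "norm xh = 1"
    and "0 \<le> kmin" and "kmin < kmax"
    and "\<forall>k \<in> {kmin<..<kmax}. far_field D S tmin tmax xh k = far_field D' S' tmin tmax' xh k"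
    and "\<forall>k \<in> {kmin<..<kmax}. far_field D S tmin tmax (- xh) k = far_field D' S' tmin tmax' (- xh) k"
  shows "K_strip D xh = K_strip D' xh \<and> tmax = tmax'"
proof -
  note along = far_field_determines_extent[OF assms(1,2,5,6)]
  note opposite = far_field_determines_extent[OF assms(1,2,5,7)]
  have "tmax + Sup ((\<lambda>y. xh \<bullet> y) ` D) = tmax' + Sup ((\<lambda>y. xh \<bullet> y) ` D')"
    using opposite(1) unfolding Inf_image_inner_uminus by simp
  with along(2) have "tmax = tmax'"
    by simp
  with along show ?thesis
    unfolding K_strip_def by simp
qed

end
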